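(* Let $q$ be a prime power, $n=q^2-1$, and let $x\in\{0,\ldots,n-1\}$ be the minimal representative of its cyclotomic coset $I_x$. Then: $I_x$ is an FR-asymmetric coset if and only if $n-xq>x$; $I_x$ is a symmetric coset if and only if $n-xq=x$; $I_x$ is an SR-asymmetric coset if and only if $n-xq<x$ (where $n-xq$ denotes the residue of $-xq$ modulo $n$ in $\{0,\ldots,n-1\}$).
   Context: Identify $\mathbb{Z}_n$ with $\{0,\ldots,n-1\}$. The cyclotomic coset of $x$ with respect to $q$ is $I_x=\{x,\,xq\bmod n\}$; its minimal representative is its least element. The (Euclidean) reciprocal coset of $I_x$ is $I_{n-x}$ (equivalently $I_{n-qx}$). $I_x$ is symmetric if $I_{n-x}=I_x$, and asymmetric otherwise. If $I_x$ is asymmetric with reciprocal coset $I_y$, where $x,y$ are the minimal representatives and $x<y$, then $I_x$ is called the FR-asymmetric coset and $I_y$ the SR-asymmetric coset of the pair. *)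

theory Defs
  imports "HOL-Computational_Algebra.Primes"
begin

text \<open>Cyclotomic coset of x modulo n with respect to q, as in the paper's context
  (for n = q^2 - 1 it is the set {x, xq mod n}).\<close>
definition cyc_coset :: "nat \<Rightarrow> nat \<Rightarrow> nat \<Rightarrow> nat set" where
  "cyc_coset n q x = {x mod n, (x * q) mod n}"

definition min_rep :: "nat \<Rightarrow> nat \<Rightarrow> nat \<Rightarrow> nat" where
  "min_rep n q x = Min (cyc_coset n q x)"

definition neg_mod :: "nat \<Rightarrow> nat \<Rightarrow> nat" where
  "neg_mod n x = (n - x mod n) mod n"

definition recip_coset :: "nat \<Rightarrow> nat \<Rightarrow> nat \<Rightarrow> nat set" where
  "recip_coset n q x = cyc_coset n q (neg_mod n x)"

definition symmetric_coset :: "nat \<Rightarrow> nat \<Rightarrow> nat \<Rightarrow> bool" where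
  "symmetric_coset n q x \<longleftrightarrow> recip_coset n q x = cyc_coset n q x"

definition FR_asymmetric :: "nat \<Rightarrow> nat \<Rightarrow> nat \<Rightarrow> bool" where
  "FR_asymmetric n q x \<longleftrightarrow> \<not> symmetric_coset n q x \<and>
     min_rep n q x < min_rep n q (neg_mod n x)"

definition SR_asymmetric :: "nat \<Rightarrow> nat \<Rightarrow> nat \<Rightarrow> bool" where
  "SR_asymmetric n q x \<longleftrightarrow> \<not> symmetric_coset n q x \<and>
     min_rep n q (neg_mod n x) < min_rep n q x"

definition prime_power :: "nat \<Rightarrow> bool" where
  "prime_power q \<longleftrightarrow> (\<exists>p k. prime p \<and> k \<ge> 1 \<and> q = p ^ k)"

end

theory Submission
  imports Defs
begin

text \<open>Write \<open>y = xq mod n\<close>, so that \<open>I\<^sub>x = {x, y}\<close> with \<open>x \<le> y\<close> by minimality of \<open>x\<close>.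
  Negation modulo \<open>n\<close> maps \<open>I\<^sub>x\<close> onto its reciprocal coset, which is therefore
  \<open>{n - x, n - y}\<close> with least element \<open>n - y = n - xq\<close>. Comparing this least element with \<open>x\<close>
  decides between the FR- and SR-asymmetric cases, and the two cosets coincide exactly when
  \<open>n - y = x\<close>.\<close>

lemma neg_mod_eq_diff:
  assumes "0 < x" "x < n"
  shows "neg_mod n x = n - x"
  using assms by (simp add: neg_mod_def)

lemma neg_mod_mod_left [simp]: "neg_mod n (x mod n) = neg_mod n x"
  by (simp add: neg_mod_def)

lemma neg_mod_mod [simp]: "neg_mod n x mod n = neg_mod n x"
  by (simp add: neg_mod_def)

lemma of_nat_neg_mod:
  assumes "0 < n"
  shows "int (neg_mod n x) = - int x mod int n"
proof -
  have "int (neg_mod n x) = (int n - int (x mod n)) mod int n"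
    using assms by (simp add: neg_mod_def of_nat_diff zmod_int)
  also have "\<dots> = - int (x mod n) mod int n"
    by (simp add: mod_diff_left_eq [symmetric])
  also have "\<dots> = - int x mod int n"
    by (simp add: zmod_int mod_minus_eq)
  finally show ?thesis .
qed

lemma neg_mod_mult_mod:
  assumes "0 < n"
  shows "neg_mod n x * q mod n = neg_mod n (x * q)"
proof -
  have "int (neg_mod n x * q mod n) = (- int x mod int n) * int q mod int n"
    using assms by (simp add: zmod_int of_nat_neg_mod)
  also have "\<dots> = - int (x * q) mod int n"
    by (simp add: mod_mult_left_eq)
  also have "\<dots> = int (neg_mod n (x * q))"
    using assms by (simp add: of_nat_neg_mod)
  finally show ?thesis
    by simp
qed

lemma recip_coset_eq_image:
  assumes "0 < n"
  shows "recip_coset n q x = neg_mod n ` cyc_coset n q x"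
  using assms by (simp add: recip_coset_def cyc_coset_def neg_mod_mult_mod)

lemma min_rep_le_mult_mod: "min_rep n q x \<le> x * q mod n"
  by (simp add: min_rep_def cyc_coset_def)

theorem mainTheorem5:
  fixes q n x :: nat
  assumes "prime_power q"
    and "n = q ^ 2 - 1"
    and "x < n"
    and "min_rep n q x = x"
  shows "(FR_asymmetric n q x \<longleftrightarrow> neg_mod n (x * q) > x)
       \<and> (symmetric_coset n q x \<longleftrightarrow> neg_mod n (x * q) = x)
       \<and> (SR_asymmetric n q x \<longleftrightarrow> neg_mod n (x * q) < x)"
proof (cases "x = 0")
  case True
  then show ?thesis
    by (simp add: FR_asymmetric_def SR_asymmetric_def symmetric_coset_def recip_coset_def
        neg_mod_def cyc_coset_def)
next
  case False
  define y where "y = x * q mod n"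
  have "0 < x" "x \<le> y" "y < n"
    using False assms(3,4) min_rep_le_mult_mod [of n q x] by (auto simp: y_def)
  have neg_xq: "neg_mod n (x * q) = n - y"
    using \<open>0 < x\<close> \<open>x \<le> y\<close> \<open>y < n\<close> neg_mod_eq_diff [of y n]
    unfolding y_def neg_mod_mod_left by linarith
  have coset: "cyc_coset n q x = {x, y}"
    using assms(3) by (simp add: cyc_coset_def y_def)
  have recip: "recip_coset n q x = {n - x, n - y}"
    using \<open>0 < x\<close> \<open>x \<le> y\<close> \<open>y < n\<close> assms(3)
    by (simp add: coset recip_coset_eq_image neg_mod_eq_diff)
  have "symmetric_coset n q x \<longleftrightarrow> n - y = x"
    using \<open>x \<le> y\<close> \<open>y < n\<close> by (auto simp: symmetric_coset_def coset recip doubleton_eq_iff)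
  moreover have "min_rep n q (neg_mod n x) = n - y"
    using \<open>x \<le> y\<close> \<open>y < n\<close>
    by (auto simp: min_rep_def recip [unfolded recip_coset_def] min_def)
  ultimately show ?thesis
    by (auto simp: FR_asymmetric_def SR_asymmetric_def neg_xq assms(4))
qed

end
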